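(* Let $\beta\in(1,2)$, $M\ge2$, and let $v=(v_0,\dots,v_M)$ be any grid function with $v_0=v_M=0$. Then $$\frac{c^{(\beta)}_\ast}{(b-a)^\beta}\,h\sum_{j=1}^{M-1}v_j^2\le h^{1-\beta}\sum_{j=1}^{M-1}\Big(\sum_{k=0}^{M}r^{(\beta)}_{j-k}v_k\Big)v_j\le 2r^{(\beta)}_0h^{1-\beta}\sum_{j=1}^{M-1}v_j^2,$$ where $c^{(\beta)}_\ast=\frac{(1-\beta)(2-\beta)(3-\beta)4^{\beta}e^{-9/4}\Psi_\beta}{3}$.
   Context: $a<b$, $h=(b-a)/M$, $x_j=a+jh$. Let $g^{(\beta)}_k=(-1)^k\binom{\beta}{k}$, $\Psi_\beta=\frac{1}{2\cos(\pi\beta/2)}$, and $r^{(\beta)}_0=2\Psi_\beta(\frac{\beta}{2}g^{(\beta)}_1+\frac{2-\beta}{2}g^{(\beta)}_0)$, $r^{(\beta)}_1=\Psi_\beta(\frac{\beta}{2}g^{(\beta)}_0+\frac{2-\beta}{2}g^{(\beta)}_1+\frac{\beta}{2}g^{(\beta)}_2)$, $r^{(\beta)}_k=\Psi_\beta(\frac{\beta}{2}g^{(\beta)}_{k+1}+\frac{2-\beta}{2}g^{(\beta)}_k)$ for $k\ge2$, $r^{(\beta)}_{-k}=r^{(\beta)}_k$ for $k\ge1$. *)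

theory Defs
  imports "HOL-Analysis.Analysis"
begin

definition gcoef :: "real \<Rightarrow> nat \<Rightarrow> real" where
  "gcoef \<beta> k = (-1) ^ k * (\<beta> gchoose k)"

definition Psi :: "real \<Rightarrow> real" where
  "Psi \<beta> = 1 / (2 * cos (pi * \<beta> / 2))"

definition rcoef_nat :: "real \<Rightarrow> nat \<Rightarrow> real" where
  "rcoef_nat \<beta> k =
     (if k = 0 then 2 * Psi \<beta> * (\<beta>/2 * gcoef \<beta> 1 + (2-\<beta>)/2 * gcoef \<beta> 0)
      else if k = 1 then Psi \<beta> * (\<beta>/2 * gcoef \<beta> 0 + (2-\<beta>)/2 * gcoef \<beta> 1
                                   + \<beta>/2 * gcoef \<beta> 2)
      else Psi \<beta> * (\<beta>/2 * gcoef \<beta> (k+1) + (2-\<beta>)/2 * gcoef \<beta> k))"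

definition rcoef :: "real \<Rightarrow> int \<Rightarrow> real" where
  "rcoef \<beta> k = rcoef_nat \<beta> (nat \<bar>k\<bar>)"

definition cstar :: "real \<Rightarrow> real" where
  "cstar \<beta> = (1-\<beta>) * (2-\<beta>) * (3-\<beta>) * 4 powr \<beta> * exp (-9/4) * Psi \<beta> / 3"

end

(* The matrix R = (r_{j-k}), 1 <= j, k <= M-1, is symmetric with nonpositive off-diagonal
   entries, because Psi_beta < 0 and g_k > 0 for k >= 2. For such a matrix with row sums s_j,
     v'Rv = sum_j s_j v_j^2 - 1/2 sum_{j,k} r_{jk} (v_j - v_k)^2
          = 1/2 sum_{j,k} r_{jk} (v_j + v_k)^2 - sum_j s_j v_j^2,
   so v'Rv lies between sum_j s_j v_j^2 and sum_j (2 r_0 - s_j) v_j^2, and it suffices to show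
   s_j >= c_*/M^beta >= 0.
   The row sum s_j is T_{j-1} + T_{M-1-j}, where T_n = r_0/2 + r_1 + ... + r_n (rcoef_sum) is
   decreasing, so s_j >= 2 T_{M-2}. Expressing T_n through the partial sums
   P_n = g_0 + ... + g_n = (-1)^n binom(beta-1, n) (gcoef_sum), which satisfy
   P_{n+1} = P_n (n+1-beta)/(n+1), and proving -P_n (n-1)^beta >= (beta-1)(2-beta)/2 by induction
   (the step is a Bernoulli inequality) gives 2 T_{M-2} >= -Psi_beta (beta-1)(2-beta)/M^beta.
   This bound is c_*/M^beta up to the factor (3-beta) 4^beta e^(-9/4)/3 <= 1. *)

theory Submission
  imports Defs
begin

lemma quadratic_form_eq_row_sums_minus_diffs:
  fixes r :: "'a \<Rightarrow> 'a \<Rightarrow> real" and v :: "'a \<Rightarrow> real"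
  assumes "\<And>j k. j \<in> A \<Longrightarrow> k \<in> A \<Longrightarrow> r j k = r k j"
  shows "(\<Sum>j\<in>A. \<Sum>k\<in>A. r j k * v k * v j)
       = (\<Sum>j\<in>A. (\<Sum>k\<in>A. r j k) * (v j)^2) - (\<Sum>j\<in>A. \<Sum>k\<in>A. r j k * (v j - v k)^2) / 2"
proof -
  have "(\<Sum>j\<in>A. \<Sum>k\<in>A. r j k * (v j - v k)^2)
      = (\<Sum>j\<in>A. \<Sum>k\<in>A. r j k * (v j)^2) + (\<Sum>j\<in>A. \<Sum>k\<in>A. r j k * (v k)^2)
        - 2 * (\<Sum>j\<in>A. \<Sum>k\<in>A. r j k * v k * v j)"
    by (simp add: power2_diff algebra_simps sum.distrib sum_subtractf sum_distrib_left)
  moreover have "(\<Sum>j\<in>A. \<Sum>k\<in>A. r j k * (v k)^2) = (\<Sum>j\<in>A. \<Sum>k\<in>A. r j k * (v j)^2)"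
    using assms by (subst sum.swap) (auto intro!: sum.cong)
  ultimately show ?thesis by (simp add: sum_distrib_right field_simps)
qed

lemma quadratic_form_eq_sums_minus_row_sums:
  fixes r :: "'a \<Rightarrow> 'a \<Rightarrow> real" and v :: "'a \<Rightarrow> real"
  assumes "\<And>j k. j \<in> A \<Longrightarrow> k \<in> A \<Longrightarrow> r j k = r k j"
  shows "(\<Sum>j\<in>A. \<Sum>k\<in>A. r j k * v k * v j)
       = (\<Sum>j\<in>A. \<Sum>k\<in>A. r j k * (v j + v k)^2) / 2 - (\<Sum>j\<in>A. (\<Sum>k\<in>A. r j k) * (v j)^2)"
proof -
  have "(\<Sum>j\<in>A. \<Sum>k\<in>A. r j k * (v j + v k)^2)
      = (\<Sum>j\<in>A. \<Sum>k\<in>A. r j k * (v j)^2) + (\<Sum>j\<in>A. \<Sum>k\<in>A. r j k * (v k)^2)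
        + 2 * (\<Sum>j\<in>A. \<Sum>k\<in>A. r j k * v k * v j)"
    by (simp add: power2_sum algebra_simps sum.distrib sum_distrib_left)
  moreover have "(\<Sum>j\<in>A. \<Sum>k\<in>A. r j k * (v k)^2) = (\<Sum>j\<in>A. \<Sum>k\<in>A. r j k * (v j)^2)"
    using assms by (subst sum.swap) (auto intro!: sum.cong)
  ultimately show ?thesis by (simp add: sum_distrib_right field_simps)
qed

lemma quadratic_form_ge_row_sums:
  fixes r :: "'a \<Rightarrow> 'a \<Rightarrow> real" and v :: "'a \<Rightarrow> real"
  assumes "\<And>j k. j \<in> A \<Longrightarrow> k \<in> A \<Longrightarrow> r j k = r k j"
    and "\<And>j k. j \<in> A \<Longrightarrow> k \<in> A \<Longrightarrow> j \<noteq> k \<Longrightarrow> r j k \<le> 0"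
  shows "(\<Sum>j\<in>A. (\<Sum>k\<in>A. r j k) * (v j)^2) \<le> (\<Sum>j\<in>A. \<Sum>k\<in>A. r j k * v k * v j)"
proof -
  have "r j k * (v j - v k)^2 \<le> 0" if "j \<in> A" "k \<in> A" for j k
    using assms(2)[OF that] by (cases "j = k") (auto intro: mult_nonpos_nonneg)
  then have "(\<Sum>j\<in>A. \<Sum>k\<in>A. r j k * (v j - v k)^2) \<le> 0"
    by (intro sum_nonpos) auto
  moreover have "(\<Sum>j\<in>A. \<Sum>k\<in>A. r j k * v k * v j)
      = (\<Sum>j\<in>A. (\<Sum>k\<in>A. r j k) * (v j)^2) - (\<Sum>j\<in>A. \<Sum>k\<in>A. r j k * (v j - v k)^2) / 2"
    using assms(1) by (rule quadratic_form_eq_row_sums_minus_diffs)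
  ultimately show ?thesis by simp
qed

lemma quadratic_form_le_diag_minus_row_sums:
  fixes r :: "'a \<Rightarrow> 'a \<Rightarrow> real" and v :: "'a \<Rightarrow> real"
  assumes "finite A" and "\<And>j k. j \<in> A \<Longrightarrow> k \<in> A \<Longrightarrow> r j k = r k j"
    and "\<And>j k. j \<in> A \<Longrightarrow> k \<in> A \<Longrightarrow> j \<noteq> k \<Longrightarrow> r j k \<le> 0"
  shows "(\<Sum>j\<in>A. \<Sum>k\<in>A. r j k * v k * v j) \<le> (\<Sum>j\<in>A. (2 * r j j - (\<Sum>k\<in>A. r j k)) * (v j)^2)"
proof -
  have "(\<Sum>k\<in>A. r j k * (v j + v k)^2) \<le> 4 * r j j * (v j)^2" if "j \<in> A" for j
  proof -
    have "(\<Sum>k\<in>A - {j}. r j k * (v j + v k)^2) \<le> 0"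
      using assms(3) that by (intro sum_nonpos) (auto intro!: mult_nonpos_nonneg)
    then show ?thesis
      using that assms(1) by (simp add: sum.remove power2_eq_square algebra_simps)
  qed
  then have "(\<Sum>j\<in>A. \<Sum>k\<in>A. r j k * (v j + v k)^2) \<le> 4 * (\<Sum>j\<in>A. r j j * (v j)^2)"
    by (simp add: sum_distrib_left mult.assoc sum_mono)
  moreover have "(\<Sum>j\<in>A. \<Sum>k\<in>A. r j k * v k * v j)
      = (\<Sum>j\<in>A. \<Sum>k\<in>A. r j k * (v j + v k)^2) / 2 - (\<Sum>j\<in>A. (\<Sum>k\<in>A. r j k) * (v j)^2)"
    using assms(2) by (rule quadratic_form_eq_sums_minus_row_sums)
  moreover have "(\<Sum>j\<in>A. (2 * r j j - (\<Sum>k\<in>A. r j k)) * (v j)^2)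
      = 2 * (\<Sum>j\<in>A. r j j * (v j)^2) - (\<Sum>j\<in>A. (\<Sum>k\<in>A. r j k) * (v j)^2)"
    by (simp add: left_diff_distrib sum_subtractf sum_distrib_left mult.assoc)
  ultimately show ?thesis by linarith
qed

lemma powr_ge_Bernoulli:
  fixes x p :: real
  assumes "1 \<le> p" and "0 < x"
  shows "1 + p * (x - 1) \<le> x powr p"
proof -
  have "p * (x - 1) \<le> x powr p - 1 powr p"
    using assms
    by (intro convex_on_imp_above_tangent[OF powr_convex[OF assms(1)]])
       (auto intro!: derivative_eq_intros simp: interior_open)
  then show ?thesis by simp
qed

definition gcoef_sum :: "real \<Rightarrow> nat \<Rightarrow> real" where
  "gcoef_sum \<beta> n = (\<Sum>m\<le>n. gcoef \<beta> m)"

lemma gcoef_0 [simp]: "gcoef \<beta> 0 = 1"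
  and gcoef_1 [simp]: "gcoef \<beta> (Suc 0) = - \<beta>"
  and gcoef_2 [simp]: "gcoef \<beta> 2 = \<beta> * (\<beta> - 1) / 2"
  by (simp_all add: gcoef_def gbinomial_Suc numeral_2_eq_2)

lemma gcoef_sum_eq_gbinomial: "gcoef_sum \<beta> n = (-1) ^ n * ((\<beta> - 1) gchoose n)"
proof (induction n)
  case 0
  then show ?case by (simp add: gcoef_sum_def)
next
  case (Suc n)
  have "gcoef_sum \<beta> (Suc n) = gcoef_sum \<beta> n + gcoef \<beta> (Suc n)"
    by (simp add: gcoef_sum_def)
  also have "gcoef \<beta> (Suc n) = (-1) ^ Suc n * (((\<beta> - 1) gchoose n) + ((\<beta> - 1) gchoose Suc n))"
    using gbinomial_Suc_Suc[of "\<beta> - 1" n] by (simp add: gcoef_def)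
  finally show ?case using Suc by (simp add: algebra_simps)
qed

lemma gcoef_sum_Suc: "gcoef_sum \<beta> (Suc n) = gcoef_sum \<beta> n * (real n + 1 - \<beta>) / (real n + 1)"
proof -
  have gchoose_Suc: "((\<beta> - 1) gchoose Suc n) = ((\<beta> - 1) gchoose n) * (\<beta> - 1 - real n) / (real n + 1)"
    using gbinomial_mult_1[of "\<beta> - 1" n] by (simp add: field_simps)
  show ?thesis unfolding gcoef_sum_eq_gbinomial power_Suc gchoose_Suc by (simp add: field_simps)
qed

lemma gcoef_sum_neg:
  assumes "1 < \<beta>" "\<beta> < 2" "1 \<le> n"
  shows "gcoef_sum \<beta> n < 0"
  using assms(3)
proof (induction n rule: dec_induct)
  case base
  then show ?case using assms by (simp add: gcoef_sum_def)
next
  case (step k)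
  then have "0 < (real k + 1 - \<beta>) / (real k + 1)" using assms by simp
  with step.IH have "gcoef_sum \<beta> k * ((real k + 1 - \<beta>) / (real k + 1)) < 0"
    by (rule mult_neg_pos)
  then show ?case by (simp add: gcoef_sum_Suc)
qed

lemma gcoef_Suc_eq_gcoef_sum: "gcoef \<beta> (Suc n) = - \<beta> * gcoef_sum \<beta> n / (real n + 1)"
proof -
  have "gcoef \<beta> (Suc n) = gcoef_sum \<beta> (Suc n) - gcoef_sum \<beta> n"
    by (simp add: gcoef_sum_def)
  then show ?thesis by (simp add: gcoef_sum_Suc field_simps)
qed

lemma gcoef_pos:
  assumes "1 < \<beta>" "\<beta> < 2" "2 \<le> k"
  shows "0 < gcoef \<beta> k"
proof -
  obtain n where k: "k = Suc n" and "1 \<le> n" using assms(3) by (cases k) auto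
  then have "gcoef_sum \<beta> n < 0" using assms gcoef_sum_neg by blast
  then show ?thesis using assms by (simp add: k gcoef_Suc_eq_gcoef_sum mult_pos_neg divide_neg_pos)
qed

lemma Psi_neg:
  assumes "1 < \<beta>" "\<beta> < 2"
  shows "Psi \<beta> < 0"
proof -
  have "0 < cos (pi - pi * \<beta> / 2)"
    using assms by (intro cos_gt_zero_pi) (auto simp: field_simps)
  then show ?thesis by (simp add: Psi_def)
qed

lemma rcoef_nat_nonpos:
  assumes "1 < \<beta>" "\<beta> < 2" "1 \<le> k"
  shows "rcoef_nat \<beta> k \<le> 0"
proof (cases "k = 1")
  case True
  then have "rcoef_nat \<beta> k = Psi \<beta> * (\<beta> * (\<beta> - 1) * (\<beta> + 2) / 4)"
    by (simp add: rcoef_nat_def field_simps)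
  moreover have "0 < \<beta> * (\<beta> - 1) * (\<beta> + 2) / 4" using assms by simp
  ultimately show ?thesis using Psi_neg[OF assms(1,2)] mult_neg_pos by fastforce
next
  case False
  then have "0 < \<beta> / 2 * gcoef \<beta> (k + 1) + (2 - \<beta>) / 2 * gcoef \<beta> k"
    using assms gcoef_pos[OF assms(1,2)] by (intro add_pos_pos mult_pos_pos) auto
  then show ?thesis using False assms Psi_neg[OF assms(1,2)]
    by (simp add: rcoef_nat_def mult_nonpos_nonneg)
qed

definition rcoef_sum :: "real \<Rightarrow> nat \<Rightarrow> real" where
  "rcoef_sum \<beta> n = rcoef_nat \<beta> 0 / 2 + (\<Sum>m=1..n. rcoef_nat \<beta> m)"

lemma rcoef_sum_Suc: "rcoef_sum \<beta> (Suc n) = rcoef_sum \<beta> n + rcoef_nat \<beta> (Suc n)"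
  by (simp add: rcoef_sum_def)

lemma rcoef_sum_antimono:
  assumes "1 < \<beta>" "\<beta> < 2" "m \<le> n"
  shows "rcoef_sum \<beta> n \<le> rcoef_sum \<beta> m"
  using assms(3)
proof (induction n rule: dec_induct)
  case (step k)
  then show ?case using rcoef_nat_nonpos[OF assms(1,2), of "Suc k"] by (simp add: rcoef_sum_Suc)
qed simp

lemma rcoef_sum_eq_gcoef_sum:
  assumes "1 \<le> n"
  shows "rcoef_sum \<beta> n = Psi \<beta> * (\<beta> / 2 * gcoef_sum \<beta> (Suc n) + (2 - \<beta>) / 2 * gcoef_sum \<beta> n)"
  using assms
proof (induction n rule: dec_induct)
  case base
  show ?case by (simp add: rcoef_sum_def rcoef_nat_def gcoef_sum_def numeral_2_eq_2 field_simps)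
next
  case (step k)
  then show ?case by (simp add: rcoef_sum_Suc rcoef_nat_def gcoef_sum_def field_simps)
qed

lemma two_rcoef_sum_eq:
  assumes "1 \<le> n"
  shows "2 * rcoef_sum \<beta> n = Psi \<beta> * gcoef_sum \<beta> n * (2 * (real n + 1) - \<beta>^2) / (real n + 1)"
  using assms by (simp add: rcoef_sum_eq_gcoef_sum gcoef_sum_Suc field_simps power2_eq_square)

lemma rcoef_row_sum:
  assumes "1 \<le> j" "j \<le> N"
  shows "(\<Sum>k=1..N. rcoef \<beta> (int j - int k)) = rcoef_sum \<beta> (j - 1) + rcoef_sum \<beta> (N - j)"
proof -
  have "{1..N} = {1..j} \<union> {j+1..N}" using assms by auto
  then have "(\<Sum>k=1..N. rcoef \<beta> (int j - int k))
      = (\<Sum>k=1..j. rcoef \<beta> (int j - int k)) + (\<Sum>k=j+1..N. rcoef \<beta> (int j - int k))"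
    by (simp add: sum.union_disjoint)
  also have "(\<Sum>k=1..j. rcoef \<beta> (int j - int k)) = (\<Sum>m<j. rcoef_nat \<beta> m)"
    by (rule sum.reindex_bij_witness[of _ "\<lambda>m. j - m" "\<lambda>k. j - k"])
       (auto simp: rcoef_def nat_diff_distrib)
  also have "\<dots> = rcoef_nat \<beta> 0 + (\<Sum>m=1..j-1. rcoef_nat \<beta> m)"
    using assms(1) by (cases j) (simp_all add: lessThan_Suc_atMost atMost_atLeast0 sum.atLeast_Suc_atMost)
  also have "(\<Sum>k=j+1..N. rcoef \<beta> (int j - int k)) = (\<Sum>m=1..N-j. rcoef_nat \<beta> m)"
    by (rule sum.reindex_bij_witness[of _ "\<lambda>m. j + m" "\<lambda>k. k - j"])
       (auto simp: rcoef_def nat_diff_distrib)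
  finally show ?thesis by (simp add: rcoef_sum_def)
qed

lemma powr_pred_mult_le:
  fixes x \<beta> :: real
  assumes "1 < x" "1 \<le> \<beta>" "\<beta> \<le> 2"
  shows "(x + 1) * (x - 1) powr \<beta> \<le> (x + 1 - \<beta>) * x powr \<beta>"
proof -
  have "1 + \<beta> * (x / (x - 1) - 1) \<le> (x / (x - 1)) powr \<beta>"
    using assms by (intro powr_ge_Bernoulli) auto
  then have bernoulli: "(x - 1 + \<beta>) * (x - 1) powr \<beta> \<le> (x - 1) * x powr \<beta>"
    using assms by (simp add: powr_divide field_simps)
  have "(\<beta> - 1)^2 \<le> 1"
    using assms by (intro power_le_one) auto
  then have "(x + 1) * (x - 1) \<le> (x + 1 - \<beta>) * (x - 1 + \<beta>)"
    by (simp add: algebra_simps power2_eq_square)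
  then have "(x + 1) * (x - 1) * (x - 1) powr \<beta> \<le> (x + 1 - \<beta>) * (x - 1 + \<beta>) * (x - 1) powr \<beta>"
    by (rule mult_right_mono) simp
  also have "\<dots> = (x + 1 - \<beta>) * ((x - 1 + \<beta>) * (x - 1) powr \<beta>)"
    by (simp add: mult.assoc)
  also have "\<dots> \<le> (x + 1 - \<beta>) * ((x - 1) * x powr \<beta>)"
    using assms bernoulli by (intro mult_left_mono) auto
  finally show ?thesis using assms by (simp add: mult.left_commute)
qed

lemma gcoef_sum_powr_lower_bound:
  assumes "1 < \<beta>" "\<beta> < 2" "2 \<le> n"
  shows "(\<beta> - 1) * (2 - \<beta>) / 2 \<le> - gcoef_sum \<beta> n * (real n - 1) powr \<beta>"
  using assms(3)
proof (induction n rule: dec_induct)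
  case base
  show ?case by (simp add: gcoef_sum_def atMost_Suc numeral_2_eq_2 gcoef_def gbinomial_Suc field_simps)
next
  case (step k)
  have "0 \<le> - gcoef_sum \<beta> k / (real k + 1)"
    using gcoef_sum_neg[OF assms(1,2), of k] step by (simp add: divide_nonpos_pos)
  then have "- gcoef_sum \<beta> k / (real k + 1) * ((real k + 1) * (real k - 1) powr \<beta>)
      \<le> - gcoef_sum \<beta> k / (real k + 1) * ((real k + 1 - \<beta>) * real k powr \<beta>)"
    using step assms by (intro mult_left_mono powr_pred_mult_le) auto
  then have "- gcoef_sum \<beta> k * (real k - 1) powr \<beta> \<le> - gcoef_sum \<beta> (Suc k) * real k powr \<beta>"
    by (simp add: gcoef_sum_Suc)
  with step.IH show ?case by simp
qed

lemma powr_pred_mult_le_powr_shift: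
  fixes x \<beta> :: real
  assumes "1 < x" "1 \<le> \<beta>"
  shows "(x + 1) * (x - 1) powr \<beta> \<le> (x - 1) * (x + 2) powr \<beta>"
proof -
  have "(x + 1) * (x - 1) powr (\<beta> - 1) \<le> (x + 2) * (x + 2) powr (\<beta> - 1)"
    using assms by (intro mult_mono powr_mono2) auto
  then have "(x + 1) * ((x - 1) * (x - 1) powr (\<beta> - 1)) \<le> (x - 1) * ((x + 2) * (x + 2) powr (\<beta> - 1))"
    using assms by (simp add: mult.left_commute mult_left_mono)
  then show ?thesis
    using assms by (simp add: powr_mult_base)
qed

lemma two_rcoef_sum_ge:
  assumes "1 < \<beta>" "\<beta> < 2" "2 \<le> n"
  shows "- Psi \<beta> * (\<beta> - 1) * (2 - \<beta>) * (real n - 1) / ((real n + 1) * (real n - 1) powr \<beta>)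
    \<le> 2 * rcoef_sum \<beta> n"
proof -
  define x where "x = real n"
  have x: "2 \<le> x" using assms(3) by (simp add: x_def)
  have "0 < - Psi \<beta>" using Psi_neg[OF assms(1,2)] by simp
  have G: "(\<beta> - 1) * (2 - \<beta>) / 2 \<le> - gcoef_sum \<beta> n * (x - 1) powr \<beta>"
    using gcoef_sum_powr_lower_bound[OF assms] by (simp add: x_def)
  have "0 \<le> (\<beta> - 1) * (2 - \<beta>) / 2" "\<beta>^2 \<le> 2^2"
    using assms by (simp, intro power_mono) auto
  then have "(\<beta> - 1) * (2 - \<beta>) / 2 * (2 * x - 2)
      \<le> - gcoef_sum \<beta> n * (x - 1) powr \<beta> * (2 * (x + 1) - \<beta>^2)"
    using G x by (intro mult_mono) auto
  then have "- Psi \<beta> * ((\<beta> - 1) * (2 - \<beta>) / 2 * (2 * x - 2))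
      \<le> - Psi \<beta> * (- gcoef_sum \<beta> n * (x - 1) powr \<beta> * (2 * (x + 1) - \<beta>^2))"
    using \<open>0 < - Psi \<beta>\<close> by (intro mult_left_mono) auto
  moreover have "- Psi \<beta> * ((\<beta> - 1) * (2 - \<beta>) / 2 * (2 * x - 2))
      = - Psi \<beta> * (\<beta> - 1) * (2 - \<beta>) * (x - 1)"
    by (simp add: field_simps)
  moreover have "- Psi \<beta> * (- gcoef_sum \<beta> n * (x - 1) powr \<beta> * (2 * (x + 1) - \<beta>^2))
      = 2 * rcoef_sum \<beta> n * ((x + 1) * (x - 1) powr \<beta>)"
    using assms(3) by (simp add: two_rcoef_sum_eq x_def field_simps)
  ultimately have "- Psi \<beta> * (\<beta> - 1) * (2 - \<beta>) * (x - 1) \<le> 2 * rcoef_sum \<beta> n * ((x + 1) * (x - 1) powr \<beta>)"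
    by linarith
  then show ?thesis
    using x by (subst pos_divide_le_eq) (auto simp: x_def)
qed

lemma rcoef_sum_lower_bound:
  assumes "1 < \<beta>" "\<beta> < 2"
  shows "- Psi \<beta> * (\<beta> - 1) * (2 - \<beta>) / real (n + 2) powr \<beta> \<le> 2 * rcoef_sum \<beta> n"
proof -
  define D where "D = - Psi \<beta> * (\<beta> - 1) * (2 - \<beta>)"
  have "0 < - Psi \<beta>" using Psi_neg[OF assms] by simp
  then have D_pos: "0 < D" unfolding D_def using assms by (intro mult_pos_pos) auto
  have "1 \<le> real (n + 2) powr \<beta>" using assms by (intro ge_one_powr_ge_zero) auto
  then have D_div: "D / real (n + 2) powr \<beta> \<le> D"
    using D_pos by (simp add: divide_le_eq)
  consider "n = 0" | "n = 1" | "2 \<le> n" by linarith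
  then show ?thesis
  proof cases
    case 1
    then have "2 * rcoef_sum \<beta> n = - Psi \<beta> * (\<beta> - 1) * (\<beta> + 2)"
      by (simp add: rcoef_sum_def rcoef_nat_def field_simps)
    then have "D \<le> 2 * rcoef_sum \<beta> n"
      using \<open>0 < - Psi \<beta>\<close> assms by (simp add: D_def mult_left_mono)
    with D_div show ?thesis by (simp add: D_def)
  next
    case 2
    then have "2 * rcoef_sum \<beta> n = D * (\<beta> + 2) / 2"
      by (simp add: two_rcoef_sum_eq gcoef_sum_def D_def field_simps power2_eq_square)
    moreover have "0 \<le> D * \<beta>" using D_pos assms by simp
    ultimately have "D \<le> 2 * rcoef_sum \<beta> n" by (simp add: algebra_simps)
    with D_div show ?thesis by (simp add: D_def)
  next
    case 3
    define x where "x = real n"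
    have x: "2 \<le> x" using 3 by (simp add: x_def)
    have "D * (x - 1) / ((x - 1) * (x + 2) powr \<beta>) \<le> D * (x - 1) / ((x + 1) * (x - 1) powr \<beta>)"
      using powr_pred_mult_le_powr_shift[of x \<beta>] D_pos x assms
      by (intro divide_left_mono mult_pos_pos) auto
    also have "\<dots> \<le> 2 * rcoef_sum \<beta> n"
      using two_rcoef_sum_ge[OF assms 3] by (simp add: D_def x_def)
    finally show ?thesis using 3 by (simp add: D_def x_def add.commute mult.assoc)
  qed
qed

lemma exp_9_div_4_ge: "49 / 9 \<le> exp (9 / 4 :: real)"
proof -
  have "(25 / 16) ^ 4 \<le> exp (9 / 16 :: real) ^ 4"
    using exp_ge_add_one_self[of "9 / 16 :: real"] by (intro power_mono) auto
  also have "\<dots> = exp (9 / 4)" by (simp add: exp_of_nat_mult[symmetric])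
  finally show ?thesis by (rule order_trans[rotated]) (simp add: power_divide)
qed

lemma cstar_le:
  assumes "1 < \<beta>" "\<beta> < 2"
  shows "cstar \<beta> \<le> - Psi \<beta> * (\<beta> - 1) * (2 - \<beta>)"
proof -
  define t where "t = \<beta> - 1"
  have t: "0 < t" "t < 1" using assms by (auto simp: t_def)
  have "exp ((1 - t) *\<^sub>R 0 + t *\<^sub>R ln 4) \<le> (1 - t) * exp 0 + t * exp (ln (4 :: real))"
    using t by (intro convex_onD[OF exp_convex]) auto
  then have "4 powr t \<le> 1 + 3 * t" by (simp add: powr_def algebra_simps)
  then have "(3 - \<beta>) * 4 powr \<beta> \<le> (2 - t) * (4 * (1 + 3 * t))"
    using t by (simp add: t_def powr_add[of 4 1 "\<beta> - 1", simplified] mult_left_mono)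
  also have "\<dots> \<le> 49 / 3"
    using zero_le_power2[of "6 * t - 5"] by (simp add: power2_eq_square algebra_simps)
  also have "\<dots> \<le> 3 * exp (9 / 4)" using exp_9_div_4_ge by simp
  finally have "(3 - \<beta>) * 4 powr \<beta> * exp (- 9 / 4) / 3 \<le> 1"
    by (simp add: exp_minus field_simps)
  moreover have "0 \<le> - Psi \<beta> * (\<beta> - 1) * (2 - \<beta>)"
    using Psi_neg[OF assms] assms by (simp add: mult_nonpos_nonneg)
  ultimately have "- Psi \<beta> * (\<beta> - 1) * (2 - \<beta>) * ((3 - \<beta>) * 4 powr \<beta> * exp (- 9 / 4) / 3)
      \<le> - Psi \<beta> * (\<beta> - 1) * (2 - \<beta>)"
    by (rule mult_left_le)
  then show ?thesis by (simp add: cstar_def algebra_simps)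
qed

lemma rcoef_row_sum_lower_bound:
  assumes "1 < \<beta>" "\<beta> < 2" "j \<in> {1..M-1}"
  shows "- Psi \<beta> * (\<beta> - 1) * (2 - \<beta>) / real M powr \<beta> \<le> (\<Sum>k=1..M-1. rcoef \<beta> (int j - int k))"
proof -
  have j: "1 \<le> j" "j \<le> M - 1" "2 \<le> M" using assms(3) by auto
  have "- Psi \<beta> * (\<beta> - 1) * (2 - \<beta>) / real M powr \<beta> \<le> 2 * rcoef_sum \<beta> (M - 2)"
    using rcoef_sum_lower_bound[OF assms(1,2), of "M - 2"] j by simp
  also have "\<dots> \<le> rcoef_sum \<beta> (j - 1) + rcoef_sum \<beta> (M - 1 - j)"
  proof -
    have le: "j - 1 \<le> M - 2" "M - 1 - j \<le> M - 2" using j by linarith+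
    show ?thesis
      using add_mono[OF rcoef_sum_antimono[OF assms(1,2) le(1)] rcoef_sum_antimono[OF assms(1,2) le(2)]]
      by simp
  qed
  also have "\<dots> = (\<Sum>k=1..M-1. rcoef \<beta> (int j - int k))"
    using rcoef_row_sum[OF j(1,2)] by simp
  finally show ?thesis .
qed

lemma rcoef_quadratic_form_bounds:
  fixes v :: "nat \<Rightarrow> real"
  assumes "1 < \<beta>" "\<beta> < 2" "v 0 = 0" "v M = 0"
  shows "cstar \<beta> / real M powr \<beta> * (\<Sum>j=1..M-1. (v j)^2)
           \<le> (\<Sum>j=1..M-1. (\<Sum>k=0..M. rcoef \<beta> (int j - int k) * v k) * v j)"
    and "(\<Sum>j=1..M-1. (\<Sum>k=0..M. rcoef \<beta> (int j - int k) * v k) * v j)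
           \<le> 2 * rcoef \<beta> 0 * (\<Sum>j=1..M-1. (v j)^2)"
proof -
  define A where "A = {1..M-1}"
  define r where "r j k = rcoef \<beta> (int j - int k)" for j k
  have sym: "r j k = r k j" for j k by (simp add: r_def rcoef_def abs_minus_commute)
  have offdiag: "r j k \<le> 0" if "j \<noteq> k" for j k
    using that rcoef_nat_nonpos[OF assms(1,2)] by (simp add: r_def rcoef_def)
  have boundary: "v k = 0" if "k \<in> {0..M} - A" for k
  proof -
    have "k = 0 \<or> k = M" using that by (auto simp: A_def)
    then show ?thesis using assms(3,4) by auto
  qed
  then have "(\<Sum>k=0..M. r j k * v k) = (\<Sum>k\<in>A. r j k * v k)" for j
    by (intro sum.mono_neutral_cong_right) (auto simp: A_def)
  then have form: "(\<Sum>j=1..M-1. (\<Sum>k=0..M. rcoef \<beta> (int j - int k) * v k) * v j)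
      = (\<Sum>j\<in>A. \<Sum>k\<in>A. r j k * v k * v j)"
    by (simp add: A_def r_def sum_distrib_right)
  have row: "cstar \<beta> / real M powr \<beta> \<le> (\<Sum>k\<in>A. r j k)" "0 \<le> (\<Sum>k\<in>A. r j k)" if "j \<in> A" for j
  proof -
    have "0 \<le> - Psi \<beta> * (\<beta> - 1) * (2 - \<beta>) / real M powr \<beta>"
      using Psi_neg[OF assms(1,2)] assms by (intro divide_nonneg_nonneg mult_nonneg_nonneg) auto
    moreover have "cstar \<beta> / real M powr \<beta> \<le> - Psi \<beta> * (\<beta> - 1) * (2 - \<beta>) / real M powr \<beta>"
      using cstar_le[OF assms(1,2)] by (rule divide_right_mono) simp
    ultimately show "cstar \<beta> / real M powr \<beta> \<le> (\<Sum>k\<in>A. r j k)" "0 \<le> (\<Sum>k\<in>A. r j k)"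
      using rcoef_row_sum_lower_bound[OF assms(1,2), of j M] that unfolding A_def r_def by linarith+
  qed
  have "cstar \<beta> / real M powr \<beta> * (\<Sum>j\<in>A. (v j)^2) \<le> (\<Sum>j\<in>A. (\<Sum>k\<in>A. r j k) * (v j)^2)"
    unfolding sum_distrib_left using row(1) by (intro sum_mono mult_right_mono) auto
  also have "\<dots> \<le> (\<Sum>j\<in>A. \<Sum>k\<in>A. r j k * v k * v j)"
    using sym offdiag by (intro quadratic_form_ge_row_sums)
  finally show "cstar \<beta> / real M powr \<beta> * (\<Sum>j=1..M-1. (v j)^2)
      \<le> (\<Sum>j=1..M-1. (\<Sum>k=0..M. rcoef \<beta> (int j - int k) * v k) * v j)"
    unfolding form by (simp only: A_def)
  have "(\<Sum>j\<in>A. \<Sum>k\<in>A. r j k * v k * v j) \<le> (\<Sum>j\<in>A. (2 * r j j - (\<Sum>k\<in>A. r j k)) * (v j)^2)"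
    using sym offdiag by (intro quadratic_form_le_diag_minus_row_sums) (auto simp: A_def)
  also have "\<dots> \<le> (\<Sum>j\<in>A. 2 * rcoef \<beta> 0 * (v j)^2)"
    using row(2) by (intro sum_mono mult_right_mono) (auto simp: r_def)
  finally show "(\<Sum>j=1..M-1. (\<Sum>k=0..M. rcoef \<beta> (int j - int k) * v k) * v j)
      \<le> 2 * rcoef \<beta> 0 * (\<Sum>j=1..M-1. (v j)^2)"
    unfolding form sum_distrib_left by (simp only: A_def mult.assoc)
qed

theorem lemma3p3:
  fixes a b \<beta> :: real and M :: nat and v :: "nat \<Rightarrow> real"
  assumes "a < b" and "1 < \<beta>" and "\<beta> < 2" and "M \<ge> 2"
    and "v 0 = 0" and "v M = 0"
  defines "h \<equiv> (b - a) / real M"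
  shows "cstar \<beta> / (b - a) powr \<beta> * h * (\<Sum>j=1..M-1. (v j)^2)
           \<le> h powr (1 - \<beta>) * (\<Sum>j=1..M-1. (\<Sum>k=0..M. rcoef \<beta> (int j - int k) * v k) * v j)
      \<and> h powr (1 - \<beta>) * (\<Sum>j=1..M-1. (\<Sum>k=0..M. rcoef \<beta> (int j - int k) * v k) * v j)
           \<le> 2 * rcoef \<beta> 0 * h powr (1 - \<beta>) * (\<Sum>j=1..M-1. (v j)^2)"
proof -
  have h: "0 < h" using assms(1,4) by (simp add: h_def)
  have "(b - a) powr \<beta> = h powr \<beta> * real M powr \<beta>"
    using h assms(4) by (simp add: h_def powr_mult[symmetric])
  then have scale: "cstar \<beta> / (b - a) powr \<beta> * h = h powr (1 - \<beta>) * (cstar \<beta> / real M powr \<beta>)"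
    using h by (simp add: powr_diff)
  note bounds = rcoef_quadratic_form_bounds[OF assms(2,3,5,6)]
  have "0 \<le> h powr (1 - \<beta>)" by simp
  from mult_left_mono[OF bounds(1) this] mult_left_mono[OF bounds(2) this] show ?thesis
    unfolding scale by (simp add: mult_ac)
qed

end
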